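(* For every $t\ge 1$, LOCAL-WEFT$[t]\subseteq$ LOCAL-FPT.
   Context: Distributed LOCAL model: a network is a finite connected undirected graph $G$, $n=|V(G)|$, nodes have unique $O(\log n)$-bit identifiers, initially know only their identifier, their neighbours' identifiers, their input labels and the parameter $k$; computation in synchronous rounds with unbounded messages to neighbours and arbitrary local computation; time = number of rounds. $\mathcal G_{s,t}$ is the set of finite connected graphs with unary predicates $P_1..P_s$ and binary predicates $E_1..E_t$; a parameterized problem is a set $\mathsf P\subseteq\mathcal G_{s,t}\times\mathbb N$. An algorithm decides $\mathsf P$ if every node outputs accept/reject and $(G,k)\in\mathsf P$ iff some node accepts. LOCAL-FPT: problems decided by a LOCAL algorithm in $f(k)$ rounds, $f$ computable. LOCAL reductions: a LOCAL algorithm turning $(G,k)$ into $(G',k')$ represented by maps $\nu:V(G')\to V(G)$ and $\eta$ assigning to each edge $\{x,y\}\in E(G')$ a path of $G$ between $\nu(x)$ and $\nu(y)$ (stored at the nodes of $G$; all nodes know $k'$). $\mathsf P_1\le_{\mathrm{LOCAL}}\mathsf P_2$ if for computable $s,r,t,p$ such a reduction exists with $|V(G')|\le|V(G)|^{s(k)}$, all paths $\eta(e)$ of length $\le r(k)$, running time $\le t(k)$ rounds, $k'\le p(k)$, and $(G,k)\in\mathsf P_1\iff(G',k')\in\mathsf P_2$ (congestion unbounded). $[\mathcal P]^{\mathrm{LOCAL}}$ is the set of problems reducing to some member of $\mathcal P$. Circuits: a Boolean decision circuit with $n$ inputs is $C=(V,E,\beta)$, $(V,E)$ a finite DAG, $\beta:V\to\{\neg,\vee,\wedge,\bigvee,\bigwedge\}\cup\{x_1,\dots,x_n\}$,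 where in-degree-0 vertices are input gates labelled by some $x_i$, in-degree-1 vertices are $\neg$, in-degree-2 vertices are $\vee$ or $\wedge$ (small gates), in-degree $\ge3$ vertices are $\bigvee$ or $\bigwedge$ (large gates), and there is exactly one vertex of out-degree 0, the output gate. It computes $f_C:\{0,1\}^n\to\{0,1\}$ in the usual way. Depth: maximum number of gates on an input–output path; weft: maximum number of large gates on an input–output path. A circuit is viewed as a coloured connected graph (edge orientation and gate types as predicates, input indices as local labels). For a family $\mathcal F$ of circuits, $\mathsf P_{\mathcal F}=\{(C,k): C\in\mathcal F$ and $C$ accepts some input vector with exactly $k$ ones$\}$. Weft$[t]$ is the class of all $\mathsf P_{\mathcal F}$ where all circuits of $\mathcal F$ have depth bounded by a common constant and weft at most $t$. LOCAL-WEFT$[t]:=[\text{Weft}[t]]^{\mathrm{LOCAL}}$. *)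

theory Defs
  imports Main
begin

section \<open>Computable functions (mu-recursive functions)\<close>

datatype recf = RZ | RS | RP nat | RC recf "recf list" | RPr recf recf | RMn recf

inductive reval :: "recf \<Rightarrow> nat list \<Rightarrow> nat \<Rightarrow> bool" where
  zero: "reval RZ xs 0"
| succ: "reval RS (x # xs) (Suc x)"
| proj: "i < length xs \<Longrightarrow> reval (RP i) xs (xs ! i)"
| comp: "list_all2 (\<lambda>g y. reval g xs y) gs ys \<Longrightarrow> reval f ys z \<Longrightarrow> reval (RC f gs) xs z"
| pr0: "reval f xs y \<Longrightarrow> reval (RPr f g) (0 # xs) y"
| prS: "reval (RPr f g) (n # xs) y \<Longrightarrow> reval g (y # n # xs) z
        \<Longrightarrow> reval (RPr f g) (Suc n # xs) z"
| mn: "reval f (n # xs) 0 \<Longrightarrow> (\<forall>m<n. \<exists>y>0. reval f (m # xs) y) \<Longrightarrow> reval (RMn f) xs n"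

definition computable :: "(nat \<Rightarrow> nat) \<Rightarrow> bool" where
  "computable f \<longleftrightarrow> (\<exists>r. \<forall>n. reval r [n] (f n))"

section \<open>Labelled graphs (the class G_{s,t}); vertices are the node identifiers\<close>

record lstruct =
  sverts :: "nat set"
  sadj :: "nat \<Rightarrow> nat \<Rightarrow> bool"
  sunary :: "nat \<Rightarrow> nat \<Rightarrow> bool"          (* sunary G i x  =  P_{i+1}(x) *)
  sbinary :: "nat \<Rightarrow> nat \<Rightarrow> nat \<Rightarrow> bool"  (* sbinary G i x y = E_{i+1}(x,y) *)

definition wf_struct :: "nat \<Rightarrow> nat \<Rightarrow> lstruct \<Rightarrow> bool" where
  "wf_struct s t G \<longleftrightarrow>
     finite (sverts G) \<and> sverts G \<noteq> {} \<and>
     (\<forall>x y. sadj G x y \<longrightarrow> x \<in> sverts G \<and> y \<in> sverts G \<and> x \<noteq> y \<and> sadj G y x) \<and>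
     (\<forall>x\<in>sverts G. \<forall>y\<in>sverts G. (x, y) \<in> {(a, b). sadj G a b}\<^sup>*) \<and>
     (\<forall>i x. sunary G i x \<longrightarrow> i < s \<and> x \<in> sverts G) \<and>
     (\<forall>i x y. sbinary G i x y \<longrightarrow> i < t \<and> sadj G x y)"

definition struct_iso :: "lstruct \<Rightarrow> lstruct \<Rightarrow> bool" where
  "struct_iso G H \<longleftrightarrow> (\<exists>f. bij_betw f (sverts G) (sverts H) \<and>
     (\<forall>x\<in>sverts G. \<forall>y\<in>sverts G. sadj H (f x) (f y) \<longleftrightarrow> sadj G x y) \<and>
     (\<forall>i. \<forall>x\<in>sverts G. sunary H i (f x) \<longleftrightarrow> sunary G i x) \<and>
     (\<forall>i. \<forall>x\<in>sverts G. \<forall>y\<in>sverts G. sbinary H i (f x) (f y) \<longleftrightarrow> sbinary G i x y))"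

text \<open>A parameterized problem: a set of pairs (G,k) with G in G_{s,t}, closed under isomorphism
  (graphs are abstract objects; identifiers are not part of the instance).\<close>
definition param_problem :: "nat \<Rightarrow> nat \<Rightarrow> (lstruct \<times> nat) set \<Rightarrow> bool" where
  "param_problem s t P \<longleftrightarrow>
     (\<forall>(G, k)\<in>P. wf_struct s t G) \<and>
     (\<forall>G H k. (G, k) \<in> P \<longrightarrow> wf_struct s t H \<longrightarrow> struct_iso G H \<longrightarrow> (H, k) \<in> P)"

text \<open>Identifiers: the vertices themselves, with O(log n) bits, i.e. all below n^c.\<close>
definition valid_ids :: "nat \<Rightarrow> lstruct \<Rightarrow> bool" where
  "valid_ids c G \<longleftrightarrow> sverts G \<subseteq> {..< card (sverts G) ^ c}"

section \<open>LOCAL algorithms\<close>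

text \<open>States and messages are natural numbers (any finite information can be encoded;
  local computation is arbitrary). The initial state depends on k, the own identifier,
  the own unary labels, the set of neighbour identifiers, and the labels of incident edges.\<close>
record 'o lalg =
  a_init :: "nat \<Rightarrow> nat \<Rightarrow> (nat \<Rightarrow> bool) \<Rightarrow> nat set \<Rightarrow> (nat \<Rightarrow> nat \<Rightarrow> bool) \<Rightarrow> (nat \<Rightarrow> nat \<Rightarrow> bool) \<Rightarrow> nat"
  a_msg :: "nat \<Rightarrow> nat \<Rightarrow> nat"            (* state, recipient id \<Rightarrow> message *)
  a_step :: "nat \<Rightarrow> (nat \<Rightarrow> nat) \<Rightarrow> nat"   (* state, messages by sender id \<Rightarrow> new state *)
  a_out :: "nat \<Rightarrow> 'o"

fun lrun :: "'o lalg \<Rightarrow> nat \<Rightarrow> lstruct \<Rightarrow> nat \<Rightarrow> nat \<Rightarrow> nat" where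
  "lrun A k G 0 v = a_init A k v (\<lambda>i. sunary G i v) {w. sadj G v w}
                      (\<lambda>i w. sbinary G i v w) (\<lambda>i w. sbinary G i w v)"
| "lrun A k G (Suc r) v = a_step A (lrun A k G r v)
                      (\<lambda>w. if sadj G v w then a_msg A (lrun A k G r w) v else 0)"

definition decides :: "nat \<Rightarrow> nat \<Rightarrow> nat \<Rightarrow> bool lalg \<Rightarrow> (nat \<Rightarrow> nat) \<Rightarrow> (lstruct \<times> nat) set \<Rightarrow> bool" where
  "decides c s t A f P \<longleftrightarrow>
     (\<forall>G k. wf_struct s t G \<longrightarrow> valid_ids c G \<longrightarrow>
        ((G, k) \<in> P \<longleftrightarrow> (\<exists>v\<in>sverts G. a_out A (lrun A k G (f k) v))))"

definition LOCAL_FPT :: "nat \<Rightarrow> (lstruct \<times> nat) set set" where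
  "LOCAL_FPT c = {P. \<exists>s t. param_problem s t P \<and>
      (\<exists>(A :: bool lalg) f. computable f \<and> decides c s t A f P)}"

section \<open>LOCAL reductions\<close>

text \<open>Output of a node v of G: the vertices x of G' with nu(x) = v (with their unary labels),
  and edges {x,y} of G' with x hosted at v, together with the path eta({x,y}) of G
  (a vertex list from v to nu(y)) and the binary labels, plus k'.\<close>
record rout =
  r_k :: nat
  r_hosts :: "nat set"
  r_ulab :: "nat \<Rightarrow> nat \<Rightarrow> bool"
  r_edges :: "(nat \<times> nat \<times> nat list) set"
  r_blab :: "nat \<Rightarrow> nat \<Rightarrow> nat \<Rightarrow> bool"

definition image_struct :: "(nat \<Rightarrow> rout) \<Rightarrow> nat set \<Rightarrow> lstruct" where
  "image_struct Out V = \<lparr> sverts = (\<Union>v\<in>V. r_hosts (Out v)),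
     sadj = (\<lambda>x y. \<exists>v\<in>V. \<exists>p. (x, y, p) \<in> r_edges (Out v) \<or> (y, x, p) \<in> r_edges (Out v)),
     sunary = (\<lambda>i x. \<exists>v\<in>V. x \<in> r_hosts (Out v) \<and> r_ulab (Out v) i x),
     sbinary = (\<lambda>i x y. \<exists>v\<in>V. x \<in> r_hosts (Out v) \<and> r_blab (Out v) i x y) \<rparr>"

definition is_path :: "lstruct \<Rightarrow> nat list \<Rightarrow> nat \<Rightarrow> nat \<Rightarrow> bool" where
  "is_path G p u v \<longleftrightarrow> p \<noteq> [] \<and> hd p = u \<and> last p = v \<and> distinct p \<and> set p \<subseteq> sverts G \<and>
     (\<forall>i. Suc i < length p \<longrightarrow> sadj G (p ! i) (p ! Suc i))"

definition valid_red_output :: "lstruct \<Rightarrow> (nat \<Rightarrow> rout) \<Rightarrow> nat \<Rightarrow> bool" where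
  "valid_red_output G Out R \<longleftrightarrow>
     (\<forall>u\<in>sverts G. \<forall>v\<in>sverts G. u \<noteq> v \<longrightarrow> r_hosts (Out u) \<inter> r_hosts (Out v) = {}) \<and>
     (\<forall>v\<in>sverts G. \<forall>(x, y, p)\<in>r_edges (Out v). x \<in> r_hosts (Out v) \<and>
        (\<exists>u\<in>sverts G. y \<in> r_hosts (Out u) \<and> is_path G p v u \<and> length p \<le> Suc R))"

definition local_reduces :: "nat \<Rightarrow> nat \<Rightarrow> nat \<Rightarrow> nat \<Rightarrow> nat \<Rightarrow>
     (lstruct \<times> nat) set \<Rightarrow> (lstruct \<times> nat) set \<Rightarrow> bool" where
  "local_reduces c s1 t1 s2 t2 P1 P2 \<longleftrightarrow>
     (\<exists>(A :: rout lalg) sf rf tf pf.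
        computable sf \<and> computable rf \<and> computable tf \<and> computable pf \<and>
        (\<forall>G k. wf_struct s1 t1 G \<longrightarrow> valid_ids c G \<longrightarrow>
           (let Out = (\<lambda>v. a_out A (lrun A k G (tf k) v)); G' = image_struct Out (sverts G)
            in \<exists>k'. (\<forall>v\<in>sverts G. r_k (Out v) = k') \<and>
                  valid_red_output G Out (rf k) \<and> wf_struct s2 t2 G' \<and>
                  card (sverts G') \<le> card (sverts G) ^ sf k \<and> k' \<le> pf k \<and>
                  ((G, k) \<in> P1 \<longleftrightarrow> (G', k') \<in> P2))))"

section \<open>Circuits as labelled graphs (6 unary predicates, 1 binary predicate)\<close>

text \<open>Unary predicate 0: input gate; 1: negation; 2: small or; 3: small and;
  4: large or; 5: large and. Binary predicate 0: wire orientation (arc x y = wire from x to y).\<close>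

abbreviation arc :: "lstruct \<Rightarrow> nat \<Rightarrow> nat \<Rightarrow> bool" where
  "arc C x y \<equiv> sbinary C 0 x y"

definition is_circuit :: "lstruct \<Rightarrow> bool" where
  "is_circuit C \<longleftrightarrow> wf_struct 6 1 C \<and>
     (\<forall>x y. sadj C x y \<longrightarrow> arc C x y \<or> arc C y x) \<and>
     (\<forall>x y. arc C x y \<longrightarrow> \<not> arc C y x) \<and>
     (\<forall>x. (x, x) \<notin> {(a, b). arc C a b}\<^sup>+) \<and>
     (\<forall>x\<in>sverts C. \<exists>!i. sunary C i x) \<and>
     (\<forall>x\<in>sverts C.
        (card {y. arc C y x} = 0 \<longleftrightarrow> sunary C 0 x) \<and>
        (card {y. arc C y x} = 1 \<longleftrightarrow> sunary C 1 x) \<and>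
        (card {y. arc C y x} = 2 \<longleftrightarrow> sunary C 2 x \<or> sunary C 3 x) \<and>
        (card {y. arc C y x} \<ge> 3 \<longleftrightarrow> sunary C 4 x \<or> sunary C 5 x)) \<and>
     (\<exists>!z. z \<in> sverts C \<and> (\<forall>y. \<not> arc C z y))"

definition circ_out :: "lstruct \<Rightarrow> nat" where
  "circ_out C = (THE z. z \<in> sverts C \<and> (\<forall>y. \<not> arc C z y))"

definition circ_inputs :: "lstruct \<Rightarrow> nat set" where
  "circ_inputs C = {x \<in> sverts C. sunary C 0 x}"

text \<open>Gate values under the input vector whose ones are exactly the input gates in S.\<close>
inductive cval :: "lstruct \<Rightarrow> nat set \<Rightarrow> nat \<Rightarrow> bool \<Rightarrow> bool" for C S where
  inp: "sunary C 0 x \<Longrightarrow> cval C S x (x \<in> S)"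
| neg: "sunary C 1 x \<Longrightarrow> arc C y x \<Longrightarrow> cval C S y b \<Longrightarrow> cval C S x (\<not> b)"
| or_t: "sunary C 2 x \<or> sunary C 4 x \<Longrightarrow> arc C y x \<Longrightarrow> cval C S y True \<Longrightarrow> cval C S x True"
| or_f: "sunary C 2 x \<or> sunary C 4 x \<Longrightarrow> (\<forall>y. arc C y x \<longrightarrow> cval C S y False) \<Longrightarrow> cval C S x False"
| and_t: "sunary C 3 x \<or> sunary C 5 x \<Longrightarrow> (\<forall>y. arc C y x \<longrightarrow> cval C S y True) \<Longrightarrow> cval C S x True"
| and_f: "sunary C 3 x \<or> sunary C 5 x \<Longrightarrow> arc C y x \<Longrightarrow> cval C S y False \<Longrightarrow> cval C S x False"

definition circ_accepts :: "lstruct \<Rightarrow> nat set \<Rightarrow> bool" where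
  "circ_accepts C S \<longleftrightarrow> cval C S (circ_out C) True"

definition io_path :: "lstruct \<Rightarrow> nat list \<Rightarrow> bool" where
  "io_path C xs \<longleftrightarrow> xs \<noteq> [] \<and> sunary C 0 (hd xs) \<and> last xs = circ_out C \<and>
     (\<forall>i. Suc i < length xs \<longrightarrow> arc C (xs ! i) (xs ! Suc i))"

definition large_gate :: "lstruct \<Rightarrow> nat \<Rightarrow> bool" where
  "large_gate C x \<longleftrightarrow> sunary C 4 x \<or> sunary C 5 x"

definition circ_depth_le :: "lstruct \<Rightarrow> nat \<Rightarrow> bool" where
  "circ_depth_le C d \<longleftrightarrow> (\<forall>xs. io_path C xs \<longrightarrow> length xs \<le> d)"

definition circ_weft_le :: "lstruct \<Rightarrow> nat \<Rightarrow> bool" where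
  "circ_weft_le C w \<longleftrightarrow> (\<forall>xs. io_path C xs \<longrightarrow> length (filter (large_gate C) xs) \<le> w)"

definition circuit_problem :: "lstruct set \<Rightarrow> (lstruct \<times> nat) set" where
  "circuit_problem F = {(C, k). C \<in> F \<and>
      (\<exists>S. S \<subseteq> circ_inputs C \<and> card S = k \<and> circ_accepts C S)}"

definition Weft :: "nat \<Rightarrow> (lstruct \<times> nat) set set" where
  "Weft w = {circuit_problem F | F.
      (\<forall>C\<in>F. is_circuit C) \<and>
      (\<forall>C H. C \<in> F \<longrightarrow> is_circuit H \<longrightarrow> struct_iso C H \<longrightarrow> H \<in> F) \<and>
      (\<exists>d. \<forall>C\<in>F. circ_depth_le C d \<and> circ_weft_le C w)}"

definition LOCAL_WEFT :: "nat \<Rightarrow> nat \<Rightarrow> (lstruct \<times> nat) set set" where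
  "LOCAL_WEFT c w = {P. \<exists>s t. param_problem s t P \<and>
      (\<exists>P2\<in>Weft w. local_reduces c s t 6 1 P P2)}"

end

theory Submission
  imports Defs "HOL-Library.Nat_Bijection"
begin

text \<open>Only the depth bound of the circuits matters. In a circuit of depth at most d every gate is joined to the output gate by a wire path of
  at most d gates, so any two gates are at distance at most 2d in the underlying graph. A LOCAL
  reduction realises each wire by a path of length at most r(k) in the network, hence all nodes
  hosting gates of the produced circuit lie within distance 2d r(k) of each other. After simulating
  the reduction, every node collects the outputs of all nodes within distance (2d+1) r(k) and
  accepts if it hosts a gate and the collected fragment is a yes-instance. If the produced circuit
  is a yes-instance, any hosting node collects all of it. Conversely, if the fragment collected by
  some node is itself a circuit of depth at most d, then all its gates are hosted within distance
  2d r(k), so every neighbour of such a gate, together with the connecting wire, is seen as well;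
  by connectedness the fragment is the whole produced circuit.\<close>

section \<open>Walks of bounded length\<close>

inductive reach_within :: "('a \<Rightarrow> 'a \<Rightarrow> bool) \<Rightarrow> nat \<Rightarrow> 'a \<Rightarrow> 'a \<Rightarrow> bool" for E where
  reach_within_refl: "reach_within E n u u"
| reach_within_step: "E u w \<Longrightarrow> reach_within E n w v \<Longrightarrow> reach_within E (Suc n) u v"

lemma reach_within_mono:
  "reach_within E n u v \<Longrightarrow> n \<le> m \<Longrightarrow> reach_within E m u v"
proof (induction arbitrary: m rule: reach_within.induct)
  case (reach_within_refl n u)
  show ?case by (rule reach_within.reach_within_refl)
next
  case (reach_within_step u w n v)
  then obtain m' where "m = Suc m'" "n \<le> m'" by (cases m) auto
  with reach_within_step show ?case by (auto intro: reach_within.reach_within_step)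
qed

lemma reach_within_trans:
  "reach_within E n u w \<Longrightarrow> reach_within E m w v \<Longrightarrow> reach_within E (n + m) u v"
proof (induction rule: reach_within.induct)
  case (reach_within_refl n u)
  then show ?case by (simp add: reach_within_mono)
next
  case (reach_within_step u w n v)
  then show ?case by (auto intro: reach_within.reach_within_step)
qed

lemma reach_within_snoc:
  "reach_within E n u w \<Longrightarrow> E w v \<Longrightarrow> reach_within E (Suc n) u v"
  using reach_within_trans[of E n u w 1 v] by (simp add: reach_within.intros)

lemma reach_within_sym:
  assumes "symp E"
  shows "reach_within E n u v \<Longrightarrow> reach_within E n v u"
proof (induction rule: reach_within.induct)
  case (reach_within_refl n u)
  show ?case by (rule reach_within.reach_within_refl)
next
  case (reach_within_step u w n v)
  then show ?case using assms by (auto intro: reach_within_snoc dest: sympD)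
qed

lemma reach_within_mono_rel:
  "reach_within E n u v \<Longrightarrow> (\<And>x y. E x y \<Longrightarrow> E' x y) \<Longrightarrow> reach_within E' n u v"
  by (induction rule: reach_within.induct) (auto intro: reach_within.intros)

lemma reach_within_Suc_iff:
  "reach_within E (Suc n) u v \<longleftrightarrow> reach_within E n u v \<or> (\<exists>w. E u w \<and> reach_within E n w v)"
proof
  assume "reach_within E (Suc n) u v"
  then show "reach_within E n u v \<or> (\<exists>w. E u w \<and> reach_within E n w v)"
    by (cases rule: reach_within.cases) (auto intro: reach_within.intros)
next
  assume "reach_within E n u v \<or> (\<exists>w. E u w \<and> reach_within E n w v)"
  then show "reach_within E (Suc n) u v"
    using reach_within_mono[of E n u v "Suc n"] by (auto intro: reach_within_step)
qed

lemma reach_within_0_iff: "reach_within E 0 u v \<longleftrightarrow> u = v"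
  by (auto intro: reach_within.intros elim: reach_within.cases)

lemma reach_within_closed:
  "reach_within E n u v \<Longrightarrow> (\<And>x y. E x y \<Longrightarrow> y \<in> S) \<Longrightarrow> u \<in> S \<Longrightarrow> v \<in> S"
  by (induction rule: reach_within.induct) auto

lemma successively_reach_within:
  "successively E ys \<Longrightarrow> ys \<noteq> [] \<Longrightarrow> reach_within E (length ys - 1) (hd ys) (last ys)"
  by (induction ys rule: induct_list012) (auto intro: reach_within.intros)

lemma wf_struct_adj_verts:
  "wf_struct s t G \<Longrightarrow> sadj G x y \<Longrightarrow> x \<in> sverts G \<and> y \<in> sverts G"
  unfolding wf_struct_def by blast

lemma wf_struct_symp: "wf_struct s t G \<Longrightarrow> symp (sadj G)"
  unfolding wf_struct_def by (blast intro: sympI)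

lemma is_path_reach_within: "is_path G p u v \<Longrightarrow> reach_within (sadj G) (length p - 1) u v"
  unfolding is_path_def using successively_reach_within[of "sadj G" p]
  by (auto simp: successively_conv_nth)

definition graph_ball :: "lstruct \<Rightarrow> nat \<Rightarrow> nat \<Rightarrow> nat set" where
  "graph_ball G j v = {u. reach_within (sadj G) j v u}"

lemma graph_ball_0 [simp]: "graph_ball G 0 v = {v}"
  by (simp add: graph_ball_def reach_within_0_iff)

lemma center_in_graph_ball: "v \<in> graph_ball G j v"
  by (simp add: graph_ball_def reach_within.reach_within_refl)

lemma graph_ball_Suc:
  "graph_ball G (Suc j) v = graph_ball G j v \<union> (\<Union>w\<in>{w. sadj G v w}. graph_ball G j w)"
  unfolding graph_ball_def using reach_within_Suc_iff[of "sadj G" j v] by blast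

lemma graph_ball_subset:
  assumes "wf_struct s t G"
  shows "graph_ball G j v \<subseteq> insert v (sverts G)"
proof
  fix u assume "u \<in> graph_ball G j v"
  then have "reach_within (sadj G) j v u" by (simp add: graph_ball_def)
  then show "u \<in> insert v (sverts G)"
    by (rule reach_within_closed) (use wf_struct_adj_verts[OF assms] in auto)
qed

lemma finite_graph_ball:
  assumes "wf_struct s t G"
  shows "finite (graph_ball G j v)"
proof -
  have "finite (sverts G)" using assms by (simp add: wf_struct_def)
  then show ?thesis using finite_subset[OF graph_ball_subset[OF assms]] by blast
qed

section \<open>Bounded-depth circuits have bounded radius\<close>

lemma is_circuit_wf_struct: "is_circuit C \<Longrightarrow> wf_struct 6 1 C"
  by (simp add: is_circuit_def)

lemma circuit_arc_adj: "is_circuit C \<Longrightarrow> arc C x y \<Longrightarrow> sadj C x y"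
  using is_circuit_wf_struct unfolding wf_struct_def by blast

lemma circuit_arc_verts: "is_circuit C \<Longrightarrow> arc C x y \<Longrightarrow> x \<in> sverts C \<and> y \<in> sverts C"
  using circuit_arc_adj is_circuit_wf_struct wf_struct_adj_verts by blast

lemma circuit_arcs_wf:
  assumes "is_circuit C"
  shows "wf {(a, b). arc C a b}" and "wf ({(a, b). arc C a b}\<inverse>)"
proof -
  let ?r = "{(a, b). arc C a b}"
  have "?r \<subseteq> sverts C \<times> sverts C" using circuit_arc_verts[OF assms] by blast
  moreover have "finite (sverts C)" using is_circuit_wf_struct[OF assms] by (simp add: wf_struct_def)
  ultimately have "finite ?r" by (meson finite_SigmaI finite_subset)
  moreover have "acyclic ?r" using assms unfolding is_circuit_def acyclic_def by blast
  ultimately show "wf ?r" and "wf (?r\<inverse>)"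
    by (simp_all add: finite_acyclic_wf finite_acyclic_wf_converse)
qed

lemma circuit_input_iff:
  "is_circuit C \<Longrightarrow> x \<in> sverts C \<Longrightarrow> card {y. arc C y x} = 0 \<longleftrightarrow> sunary C 0 x"
  unfolding is_circuit_def by meson

lemma circuit_unique_output: "is_circuit C \<Longrightarrow> \<exists>!z. z \<in> sverts C \<and> (\<forall>y. \<not> arc C z y)"
  unfolding is_circuit_def by (elim conjE)

lemma circuit_wire_from_input:
  assumes C: "is_circuit C"
  shows "x \<in> sverts C \<Longrightarrow>
    \<exists>ys. ys \<noteq> [] \<and> successively (arc C) ys \<and> sunary C 0 (hd ys) \<and> last ys = x"
proof (induction x rule: wf_induct[OF circuit_arcs_wf(1)[OF C]])
  case (1 x)
  show ?case
  proof (cases "sunary C 0 x")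
    case True
    then show ?thesis by (intro exI[of _ "[x]"]) auto
  next
    case False
    then have "card {y. arc C y x} \<noteq> 0" using circuit_input_iff[OF C 1(2)] by blast
    then obtain y where y: "arc C y x" by (metis card.empty empty_Collect_eq)
    then obtain ys where "ys \<noteq> []" "successively (arc C) ys" "sunary C 0 (hd ys)" "last ys = y"
      using 1(1) y circuit_arc_verts[OF C y] by blast
    with y show ?thesis by (intro exI[of _ "ys @ [x]"]) (auto simp: successively_append_iff)
  qed
qed

lemma circuit_sink_eq_circ_out:
  assumes "is_circuit C" "z \<in> sverts C" "\<forall>y. \<not> arc C z y"
  shows "z = circ_out C"
  using assms(2,3) the1_equality[OF circuit_unique_output[OF assms(1)]] unfolding circ_out_def by blast

lemma circuit_wire_to_output:
  assumes C: "is_circuit C"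
  shows "x \<in> sverts C \<Longrightarrow>
    \<exists>ys. ys \<noteq> [] \<and> successively (arc C) ys \<and> hd ys = x \<and> last ys = circ_out C"
proof (induction x rule: wf_induct[OF circuit_arcs_wf(2)[OF C]])
  case (1 x)
  show ?case
  proof (cases "\<forall>y. \<not> arc C x y")
    case True
    then show ?thesis using circuit_sink_eq_circ_out[OF C 1(2)] by (intro exI[of _ "[x]"]) auto
  next
    case False
    then obtain y where y: "arc C x y" by blast
    then obtain ys where "ys \<noteq> []" "successively (arc C) ys" "hd ys = y" "last ys = circ_out C"
      using 1(1) circuit_arc_verts[OF C y] by blast
    with y show ?thesis by (intro exI[of _ "x # ys"]) (cases ys; auto)
  qed
qed

lemma circuit_reach_output:
  assumes C: "is_circuit C" and depth: "circ_depth_le C d" and x: "x \<in> sverts C"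
  shows "reach_within (sadj C) d x (circ_out C)"
proof -
  obtain xs where xs: "xs \<noteq> []" "successively (arc C) xs" "sunary C 0 (hd xs)" "last xs = x"
    using circuit_wire_from_input[OF C x] by blast
  obtain ys where ys: "ys \<noteq> []" "successively (arc C) ys" "hd ys = x" "last ys = circ_out C"
    using circuit_wire_to_output[OF C x] by blast
  have "successively (arc C) (xs @ tl ys)"
    using xs ys by (cases ys) (auto simp: successively_append_iff successively_Cons)
  moreover have "last (xs @ tl ys) = circ_out C"
    using xs ys by (cases ys) (auto simp: last_append)
  ultimately have "io_path C (xs @ tl ys)"
    unfolding io_path_def using xs by (simp add: successively_conv_nth)
  then have "length (xs @ tl ys) \<le> d" using depth unfolding circ_depth_le_def by blast
  then have "length ys - 1 \<le> d" using xs(1) by simp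
  moreover have "reach_within (arc C) (length ys - 1) x (circ_out C)"
    using successively_reach_within[OF ys(2,1)] ys(3,4) by simp
  ultimately have "reach_within (arc C) d x (circ_out C)" by (rule reach_within_mono[rotated])
  then show ?thesis
    by (rule reach_within_mono_rel) (rule circuit_arc_adj[OF C])
qed

lemma circuit_diameter:
  assumes C: "is_circuit C" "circ_depth_le C d" and xy: "x \<in> sverts C" "y \<in> sverts C"
  shows "reach_within (sadj C) (d + d) x y"
proof -
  have "symp (sadj C)" using wf_struct_symp[OF is_circuit_wf_struct[OF C(1)]] .
  then have "reach_within (sadj C) d (circ_out C) y"
    using circuit_reach_output[OF C xy(2)] by (rule reach_within_sym)
  with circuit_reach_output[OF C xy(1)] show ?thesis by (rule reach_within_trans)
qed

section \<open>Geometry of the structure produced by a LOCAL reduction\<close>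

lemma sverts_image_struct [simp]:
  "sverts (image_struct Out W) = (\<Union>w\<in>W. r_hosts (Out w))"
  by (simp add: image_struct_def)

lemma image_struct_comp: "image_struct (\<lambda>v. g (h v)) V = image_struct g (h ` V)"
  unfolding image_struct_def by auto

lemma host_unique:
  assumes "valid_red_output G Out R" "u \<in> sverts G" "u' \<in> sverts G"
    "x \<in> r_hosts (Out u)" "x \<in> r_hosts (Out u')"
  shows "u = u'"
  using assms unfolding valid_red_output_def by blast

lemma host_mem_if_image_vert:
  assumes "valid_red_output G Out R" "W \<subseteq> sverts G" "x \<in> sverts (image_struct Out W)"
    "u \<in> sverts G" "x \<in> r_hosts (Out u)"
  shows "u \<in> W"
  using assms host_unique[OF assms(1)] by auto

lemma stored_edge_short:
  assumes "valid_red_output G Out R" "w \<in> sverts G" "(x, y, p) \<in> r_edges (Out w)"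
  shows "x \<in> r_hosts (Out w) \<and>
    (\<exists>u\<in>sverts G. y \<in> r_hosts (Out u) \<and> reach_within (sadj G) R w u)"
proof -
  obtain u where "x \<in> r_hosts (Out w)" "u \<in> sverts G" "y \<in> r_hosts (Out u)"
      "is_path G p w u" "length p \<le> Suc R"
    using assms unfolding valid_red_output_def by fastforce
  moreover from this have "reach_within (sadj G) R w u"
    using is_path_reach_within reach_within_mono by fastforce
  ultimately show ?thesis by blast
qed

lemma image_edge_short:
  assumes val: "valid_red_output G Out R" and wfG: "wf_struct s t G" and V: "V \<subseteq> sverts G"
    and e: "sadj (image_struct Out V) x y"
  obtains wx wy where "wx \<in> sverts G" "wy \<in> sverts G" "x \<in> r_hosts (Out wx)"
    "y \<in> r_hosts (Out wy)" "reach_within (sadj G) R wx wy"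
proof -
  obtain w p where w: "w \<in> V" and "(x, y, p) \<in> r_edges (Out w) \<or> (y, x, p) \<in> r_edges (Out w)"
    using e by (auto simp: image_struct_def)
  then consider "(x, y, p) \<in> r_edges (Out w)" | "(y, x, p) \<in> r_edges (Out w)" by blast
  then show thesis
  proof cases
    case 1
    then show thesis using stored_edge_short[OF val _ 1] w V that by blast
  next
    case 2
    then obtain u where "u \<in> sverts G" "x \<in> r_hosts (Out u)" "y \<in> r_hosts (Out w)"
        "reach_within (sadj G) R w u"
      using stored_edge_short[OF val _ 2] w V by blast
    then show thesis using reach_within_sym[OF wf_struct_symp[OF wfG]] w V that by blast
  qed
qed

lemma image_edge_mono:
  assumes val: "valid_red_output G Out R" and V: "V \<subseteq> sverts G"
    and e: "sadj (image_struct Out V) x y"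
    and hosts: "\<And>u. u \<in> sverts G \<Longrightarrow> x \<in> r_hosts (Out u) \<or> y \<in> r_hosts (Out u) \<Longrightarrow> u \<in> V'"
  shows "sadj (image_struct Out V') x y"
proof -
  obtain w p where w: "w \<in> V" and wp: "(x, y, p) \<in> r_edges (Out w) \<or> (y, x, p) \<in> r_edges (Out w)"
    using e by (auto simp: image_struct_def)
  then have "x \<in> r_hosts (Out w) \<or> y \<in> r_hosts (Out w)"
    using stored_edge_short[OF val] V by blast
  then have "w \<in> V'" using hosts w V by blast
  with wp show ?thesis by (auto simp: image_struct_def)
qed

lemma image_walk_short:
  assumes val: "valid_red_output G Out R" and wfG: "wf_struct s t G" and V: "V \<subseteq> sverts G"
  shows "reach_within (sadj (image_struct Out V)) n x y \<Longrightarrow>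
    u \<in> sverts G \<Longrightarrow> x \<in> r_hosts (Out u) \<Longrightarrow> u' \<in> sverts G \<Longrightarrow> y \<in> r_hosts (Out u') \<Longrightarrow>
    reach_within (sadj G) (n * R) u u'"
proof (induction arbitrary: u rule: reach_within.induct)
  case (reach_within_refl n x)
  then have "u = u'" using host_unique[OF val] by blast
  then show ?case by (simp add: reach_within.reach_within_refl)
next
  case (reach_within_step x z n y)
  obtain wx wz where h: "wx \<in> sverts G" "wz \<in> sverts G" "x \<in> r_hosts (Out wx)"
      "z \<in> r_hosts (Out wz)" "reach_within (sadj G) R wx wz"
    using image_edge_short[OF val wfG V reach_within_step(1)] by blast
  have "wx = u" using host_unique[OF val] h reach_within_step by blast
  have "reach_within (sadj G) (n * R) wz u'" using reach_within_step h by blast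
  then have "reach_within (sadj G) (R + n * R) wx u'" by (rule reach_within_trans[OF h(5)])
  with \<open>wx = u\<close> show ?case by simp
qed

lemma image_struct_eq_if_verts_subset:
  assumes val: "valid_red_output G Out R" and V: "V \<subseteq> sverts G"
    and verts: "sverts (image_struct Out (sverts G)) \<subseteq> sverts (image_struct Out V)"
  shows "image_struct Out V = image_struct Out (sverts G)"
proof -
  have cover: "u \<in> V" if "u \<in> sverts G" "x \<in> r_hosts (Out u)" for u x
    using host_mem_if_image_vert[OF val V _ that] verts that by auto
  have edge_cover: "u \<in> V" if "u \<in> sverts G" "(x, y, p) \<in> r_edges (Out u)" for u x y p
    using stored_edge_short[OF val that] cover that(1) by blast
  show ?thesis
    unfolding image_struct_def using V cover edge_cover
    by (auto 0 3 intro!: ext)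
qed

lemma circuit_image_hosts_close:
  assumes val: "valid_red_output G Out R" and wfG: "wf_struct s t G"
    and W: "W \<subseteq> sverts G" and C: "is_circuit (image_struct Out W)" "circ_depth_le (image_struct Out W) d"
    and v: "v \<in> sverts G" "z \<in> r_hosts (Out v)" "z \<in> sverts (image_struct Out W)"
    and u: "u \<in> sverts G" "x \<in> r_hosts (Out u)" "x \<in> sverts (image_struct Out W)"
  shows "reach_within (sadj G) ((d + d) * R) v u"
  using image_walk_short[OF val wfG W circuit_diameter[OF C v(3) u(3)] v(1,2) u(1,2)] .

lemma ball_image_eq_if_image_circuit:
  assumes val: "valid_red_output G Out R" and wfG: "wf_struct s t G"
    and C: "is_circuit (image_struct Out (sverts G))" "circ_depth_le (image_struct Out (sverts G)) d"
    and v: "v \<in> sverts G" "z \<in> r_hosts (Out v)"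
  shows "image_struct Out (graph_ball G ((2 * d + 1) * R) v) = image_struct Out (sverts G)"
proof (rule image_struct_eq_if_verts_subset[OF val])
  let ?B = "graph_ball G ((2 * d + 1) * R) v"
  show "?B \<subseteq> sverts G" using graph_ball_subset[OF wfG] v(1) by blast
  show "sverts (image_struct Out (sverts G)) \<subseteq> sverts (image_struct Out ?B)"
  proof
    fix x assume x: "x \<in> sverts (image_struct Out (sverts G))"
    then obtain u where u: "u \<in> sverts G" "x \<in> r_hosts (Out u)" by auto
    have "reach_within (sadj G) ((d + d) * R) v u"
      using circuit_image_hosts_close[OF val wfG order.refl C v] u x v by auto
    then have "reach_within (sadj G) ((2 * d + 1) * R) v u"
      by (rule reach_within_mono) (simp add: mult_2 add_mult_distrib)
    then have "u \<in> ?B" by (simp add: graph_ball_def)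
    with u show "x \<in> sverts (image_struct Out ?B)" by auto
  qed
qed

lemma ball_image_edge_closed:
  assumes val: "valid_red_output G Out R" and wfG: "wf_struct s t G"
    and C: "is_circuit (image_struct Out (graph_ball G ((2 * d + 1) * R) v))"
      "circ_depth_le (image_struct Out (graph_ball G ((2 * d + 1) * R) v)) d"
    and v: "v \<in> sverts G" "z \<in> r_hosts (Out v)"
    and x: "x \<in> sverts (image_struct Out (graph_ball G ((2 * d + 1) * R) v))"
    and e: "sadj (image_struct Out (sverts G)) x y"
  shows "sadj (image_struct Out (graph_ball G ((2 * d + 1) * R) v)) x y"
proof (rule image_edge_mono[OF val order.refl e])
  let ?B = "graph_ball G ((2 * d + 1) * R) v"
  have B: "?B \<subseteq> sverts G" using graph_ball_subset[OF wfG] v(1) by blast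
  obtain wx wy where h: "wx \<in> sverts G" "wy \<in> sverts G" "x \<in> r_hosts (Out wx)"
      "y \<in> r_hosts (Out wy)" "reach_within (sadj G) R wx wy"
    using image_edge_short[OF val wfG order.refl e] by blast
  have "z \<in> sverts (image_struct Out ?B)" using v center_in_graph_ball by auto
  then have "reach_within (sadj G) ((d + d) * R) v wx"
    using circuit_image_hosts_close[OF val wfG B C v] h(1,3) x by blast
  then have "reach_within (sadj G) ((d + d) * R + R) v wy" using h(5) by (rule reach_within_trans)
  then have "wy \<in> ?B" by (simp add: graph_ball_def mult_2 add_mult_distrib add.commute)
  moreover have "wx \<in> ?B" using host_mem_if_image_vert[OF val B x h(1,3)] .
  ultimately show "u \<in> ?B" if "u \<in> sverts G" "x \<in> r_hosts (Out u) \<or> y \<in> r_hosts (Out u)" for u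
    using that host_unique[OF val] h by blast
qed

lemma ball_image_eq_if_ball_image_circuit:
  assumes val: "valid_red_output G Out R" and wfG: "wf_struct s t G"
    and wfG': "wf_struct 6 1 (image_struct Out (sverts G))"
    and C: "is_circuit (image_struct Out (graph_ball G ((2 * d + 1) * R) v))"
      "circ_depth_le (image_struct Out (graph_ball G ((2 * d + 1) * R) v)) d"
    and v: "v \<in> sverts G" "z \<in> r_hosts (Out v)"
  shows "image_struct Out (graph_ball G ((2 * d + 1) * R) v) = image_struct Out (sverts G)"
proof (rule image_struct_eq_if_verts_subset[OF val])
  let ?B = "graph_ball G ((2 * d + 1) * R) v"
  let ?H = "image_struct Out ?B" and ?G' = "image_struct Out (sverts G)"
  show "?B \<subseteq> sverts G" using graph_ball_subset[OF wfG] v(1) by blast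
  show "sverts ?G' \<subseteq> sverts ?H"
  proof
    fix y assume "y \<in> sverts ?G'"
    moreover have "z \<in> sverts ?G'" using v by auto
    ultimately have "(z, y) \<in> {(a, b). sadj ?G' a b}\<^sup>*" using wfG' unfolding wf_struct_def by blast
    then show "y \<in> sverts ?H"
    proof (induction rule: rtrancl_induct)
      case base
      show ?case using v center_in_graph_ball by auto
    next
      case (step x y)
      then have "sadj ?H x y" using ball_image_edge_closed[OF val wfG C v] by blast
      then show ?case using wf_struct_adj_verts[OF is_circuit_wf_struct[OF C(1)]] by blast
    qed
  qed
qed

lemma image_accepted_iff_ball_image_accepted:
  assumes val: "valid_red_output G Out R" and wfG: "wf_struct s t G"
    and wfG': "wf_struct 6 1 (image_struct Out (sverts G))"
    and P2: "\<forall>(C, k)\<in>P2. is_circuit C \<and> circ_depth_le C d"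
    and k': "\<forall>v\<in>sverts G. r_k (Out v) = k'"
  shows "(image_struct Out (sverts G), k') \<in> P2 \<longleftrightarrow>
    (\<exists>v\<in>sverts G. r_hosts (Out v) \<noteq> {} \<and>
       (image_struct Out (graph_ball G ((2 * d + 1) * R) v), r_k (Out v)) \<in> P2)"
proof
  assume acc: "(image_struct Out (sverts G), k') \<in> P2"
  have "sverts (image_struct Out (sverts G)) \<noteq> {}" using wfG' unfolding wf_struct_def by blast
  then obtain v z where v: "v \<in> sverts G" "z \<in> r_hosts (Out v)" by auto
  moreover have "image_struct Out (graph_ball G ((2 * d + 1) * R) v) = image_struct Out (sverts G)"
    using ball_image_eq_if_image_circuit[OF val wfG _ _ v] acc P2 by blast
  ultimately show "\<exists>v\<in>sverts G. r_hosts (Out v) \<noteq> {} \<and>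
       (image_struct Out (graph_ball G ((2 * d + 1) * R) v), r_k (Out v)) \<in> P2"
    using acc k' by auto
next
  assume "\<exists>v\<in>sverts G. r_hosts (Out v) \<noteq> {} \<and>
       (image_struct Out (graph_ball G ((2 * d + 1) * R) v), r_k (Out v)) \<in> P2"
  then obtain v z where v: "v \<in> sverts G" "z \<in> r_hosts (Out v)"
    and acc: "(image_struct Out (graph_ball G ((2 * d + 1) * R) v), r_k (Out v)) \<in> P2" by blast
  moreover have "image_struct Out (graph_ball G ((2 * d + 1) * R) v) = image_struct Out (sverts G)"
    using ball_image_eq_if_ball_image_circuit[OF val wfG wfG' _ _ v] acc P2 by blast
  ultimately show "(image_struct Out (sverts G), k') \<in> P2" using k' by auto
qed

section \<open>Computability of the round bound\<close>

definition recf_add :: recf where "recf_add = RPr (RP 0) (RC RS [RP 0])"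

definition recf_mult :: recf where "recf_mult = RPr RZ (RC recf_add [RP 0, RP 2])"

fun recf_const :: "nat \<Rightarrow> recf" where
  "recf_const 0 = RZ"
| "recf_const (Suc c) = RC RS [recf_const c]"

lemma reval_RC2: "reval h [a, b] z \<Longrightarrow> reval f xs a \<Longrightarrow> reval g xs b \<Longrightarrow> reval (RC h [f, g]) xs z"
  by (rule reval.comp[where ys = "[a, b]"]) auto

lemma reval_recf_add: "reval recf_add [n, m] (n + m)"
proof (induction n)
  case 0
  have "reval (RP 0) [m] m" using reval.proj[of 0 "[m]"] by simp
  then show ?case unfolding recf_add_def by (auto intro: reval.pr0)
next
  case (Suc n)
  have "reval (RP 0) [n + m, n, m] (n + m)" using reval.proj[of 0 "[n + m, n, m]"] by simp
  then have "reval (RC RS [RP 0]) [n + m, n, m] (Suc (n + m))"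
    by (auto intro!: reval.comp[where ys = "[n + m]"] reval.succ)
  with Suc show ?case unfolding recf_add_def by (auto intro: reval.prS)
qed

lemma reval_recf_mult: "reval recf_mult [n, m] (n * m)"
proof (induction n)
  case 0
  then show ?case unfolding recf_mult_def by (auto intro: reval.pr0 reval.zero)
next
  case (Suc n)
  have "reval (RC recf_add [RP 0, RP 2]) [n * m, n, m] (n * m + m)"
    using reval_RC2[OF reval_recf_add reval.proj reval.proj, of 0 "[n * m, n, m]" 2] by simp
  then have "reval (RC recf_add [RP 0, RP 2]) [n * m, n, m] (Suc n * m)" by (simp add: add.commute)
  with Suc show ?case unfolding recf_mult_def by (auto intro: reval.prS)
qed

lemma reval_recf_const: "reval (recf_const c) xs c"
  by (induction c) (auto intro: reval.zero reval.succ reval.comp[where ys = "[_]"])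

lemma computable_const: "computable (\<lambda>_. c)"
  unfolding computable_def using reval_recf_const by blast

lemma computable_add:
  assumes "computable f" "computable g"
  shows "computable (\<lambda>n. f n + g n)"
proof -
  obtain rf rg where "\<And>n. reval rf [n] (f n)" "\<And>n. reval rg [n] (g n)"
    using assms unfolding computable_def by blast
  then have "\<And>n. reval (RC recf_add [rf, rg]) [n] (f n + g n)"
    by (rule reval_RC2[OF reval_recf_add])
  then show ?thesis unfolding computable_def by blast
qed

lemma computable_mult:
  assumes "computable f" "computable g"
  shows "computable (\<lambda>n. f n * g n)"
proof -
  obtain rf rg where "\<And>n. reval rf [n] (f n)" "\<And>n. reval rg [n] (g n)"
    using assms unfolding computable_def by blast
  then have "\<And>n. reval (RC recf_mult [rf, rg]) [n] (f n * g n)"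
    by (rule reval_RC2[OF reval_recf_mult])
  then show ?thesis unfolding computable_def by blast
qed

section \<open>Gathering the output of a reduction\<close>

text \<open>A state of \<open>gather_alg A T P2\<close> stores k, the round number, the current state of A and
  the set of final states of A (those after T k rounds) received so far. The first T k rounds
  simulate A; afterwards the final states are flooded, and a node accepts if it hosts a vertex of
  the constructed instance and the instance assembled from the final states it has received,
  together with its own k', lies in P2.\<close>

definition gather_state :: "nat \<Rightarrow> nat \<Rightarrow> nat \<Rightarrow> nat set \<Rightarrow> nat" where
  "gather_state k r s M = prod_encode (k, prod_encode (r, prod_encode (s, set_encode M)))"

definition gs_param :: "nat \<Rightarrow> nat" where
  "gs_param st = fst (prod_decode st)"

definition gs_round :: "nat \<Rightarrow> nat" where
  "gs_round st = fst (prod_decode (snd (prod_decode st)))"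

definition gs_inner :: "nat \<Rightarrow> nat" where
  "gs_inner st = fst (prod_decode (snd (prod_decode (snd (prod_decode st)))))"

definition gs_seen :: "nat \<Rightarrow> nat set" where
  "gs_seen st = set_decode (snd (prod_decode (snd (prod_decode (snd (prod_decode st))))))"

lemma gather_state_sel [simp]:
  "gs_param (gather_state k r s M) = k" "gs_round (gather_state k r s M) = r"
  "gs_inner (gather_state k r s M) = s" "finite M \<Longrightarrow> gs_seen (gather_state k r s M) = M"
  unfolding gather_state_def gs_param_def gs_round_def gs_inner_def gs_seen_def by simp_all

definition gather_alg :: "rout lalg \<Rightarrow> (nat \<Rightarrow> nat) \<Rightarrow> (lstruct \<times> nat) set \<Rightarrow> bool lalg" where
  "gather_alg A T P2 = \<lparr>
     a_init = (\<lambda>k v lab N b1 b2. gather_state k 0 (a_init A k v lab N b1 b2)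
                 (if T k = 0 then {a_init A k v lab N b1 b2} else {})),
     a_msg = (\<lambda>st w. if gs_round st < T (gs_param st) then a_msg A (gs_inner st) w
                     else set_encode (gs_seen st)),
     a_step = (\<lambda>st m. if gs_round st < T (gs_param st)
                 then gather_state (gs_param st) (Suc (gs_round st)) (a_step A (gs_inner st) m)
                        (if Suc (gs_round st) = T (gs_param st) then {a_step A (gs_inner st) m} else {})
                 else gather_state (gs_param st) (Suc (gs_round st)) (gs_inner st)
                        (gs_seen st \<union> (\<Union>w. set_decode (m w)))),
     a_out = (\<lambda>st. r_hosts (a_out A (gs_inner st)) \<noteq> {} \<and>
                 (image_struct (a_out A) (gs_seen st), r_k (a_out A (gs_inner st))) \<in> P2) \<rparr>"

lemma gather_alg_simps:
  "a_init (gather_alg A T P2) k v lab N b1 b2 = gather_state k 0 (a_init A k v lab N b1 b2)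
     (if T k = 0 then {a_init A k v lab N b1 b2} else {})"
  "a_msg (gather_alg A T P2) st w = (if gs_round st < T (gs_param st) then a_msg A (gs_inner st) w
     else set_encode (gs_seen st))"
  "a_step (gather_alg A T P2) st m = (if gs_round st < T (gs_param st)
     then gather_state (gs_param st) (Suc (gs_round st)) (a_step A (gs_inner st) m)
            (if Suc (gs_round st) = T (gs_param st) then {a_step A (gs_inner st) m} else {})
     else gather_state (gs_param st) (Suc (gs_round st)) (gs_inner st)
            (gs_seen st \<union> (\<Union>w. set_decode (m w))))"
  "a_out (gather_alg A T P2) st = (r_hosts (a_out A (gs_inner st)) \<noteq> {} \<and>
     (image_struct (a_out A) (gs_seen st), r_k (a_out A (gs_inner st))) \<in> P2)"
  unfolding gather_alg_def by simp_all

lemma lrun_gather_alg_simulates: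
  "r \<le> T k \<Longrightarrow> lrun (gather_alg A T P2) k G r v =
     gather_state k r (lrun A k G r v) (if r = T k then {lrun A k G r v} else {})"
proof (induction r arbitrary: v)
  case 0
  then show ?case by (simp add: gather_alg_simps)
next
  case (Suc r)
  then have IH: "\<And>w. lrun (gather_alg A T P2) k G r w = gather_state k r (lrun A k G r w) {}"
    by simp
  have "(\<lambda>w. if sadj G v w then a_msg (gather_alg A T P2) (lrun (gather_alg A T P2) k G r w) v else 0)
      = (\<lambda>w. if sadj G v w then a_msg A (lrun A k G r w) v else 0)"
    using Suc.prems by (intro ext) (simp add: IH gather_alg_simps)
  with Suc.prems show ?case by (simp only: lrun.simps) (simp add: IH gather_alg_simps)
qed

lemma lrun_gather_alg_floods:
  assumes wfG: "wf_struct s t G"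
  shows "lrun (gather_alg A T P2) k G (T k + j) v =
    gather_state k (T k + j) (lrun A k G (T k) v) ((\<lambda>u. lrun A k G (T k) u) ` graph_ball G j v)"
proof (induction j arbitrary: v)
  case 0
  show ?case using lrun_gather_alg_simulates[of "T k" T k A P2 G v] by simp
next
  case (Suc j)
  let ?f = "\<lambda>u. lrun A k G (T k) u"
  have fin: "\<And>w. finite (?f ` graph_ball G j w)" using finite_graph_ball[OF wfG] by blast
  have msg: "(\<lambda>w. if sadj G v w then a_msg (gather_alg A T P2) (lrun (gather_alg A T P2) k G (T k + j) w) v else 0)
      = (\<lambda>w. if sadj G v w then set_encode (?f ` graph_ball G j w) else 0)"
    by (intro ext) (simp add: Suc gather_alg_simps fin)
  have received: "(\<Union>w. set_decode (if sadj G v w then set_encode (?f ` graph_ball G j w) else 0))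
      = (\<Union>w\<in>{w. sadj G v w}. ?f ` graph_ball G j w)"
    using fin by (auto split: if_splits) blast
  have "lrun (gather_alg A T P2) k G (T k + Suc j) v =
      a_step (gather_alg A T P2) (lrun (gather_alg A T P2) k G (T k + j) v)
        (\<lambda>w. if sadj G v w then set_encode (?f ` graph_ball G j w) else 0)"
    by (simp only: add_Suc_right lrun.simps msg)
  also have "\<dots> = gather_state k (Suc (T k + j)) (?f v) (?f ` graph_ball G j v \<union>
      (\<Union>w. set_decode (if sadj G v w then set_encode (?f ` graph_ball G j w) else 0)))"
    by (simp add: Suc gather_alg_simps fin)
  also have "\<dots> = gather_state k (T k + Suc j) (?f v) (?f ` graph_ball G (Suc j) v)"
    by (simp only: received graph_ball_Suc image_Un image_UN) simp
  finally show ?case .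
qed

lemma gather_alg_accepts_iff:
  fixes A :: "rout lalg" and T :: "nat \<Rightarrow> nat" and k :: nat
  assumes wfG: "wf_struct s t G"
  defines "Out \<equiv> \<lambda>u. a_out A (lrun A k G (T k) u)"
  shows "a_out (gather_alg A T P2) (lrun (gather_alg A T P2) k G (T k + j) v) \<longleftrightarrow>
    r_hosts (Out v) \<noteq> {} \<and> (image_struct Out (graph_ball G j v), r_k (Out v)) \<in> P2"
proof -
  have "finite ((\<lambda>u. lrun A k G (T k) u) ` graph_ball G j v)"
    using finite_graph_ball[OF wfG] by blast
  then show ?thesis
    unfolding lrun_gather_alg_floods[OF wfG] Out_def image_struct_comp
    by (simp add: gather_alg_simps)
qed

lemma Weft_depth_bounded: "P \<in> Weft w \<Longrightarrow> \<exists>d. \<forall>(C, k)\<in>P. is_circuit C \<and> circ_depth_le C d"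
  unfolding Weft_def circuit_problem_def by fastforce

lemma local_reduces_depth_bounded_circuits_FPT:
  assumes P: "param_problem s t P" and red: "local_reduces c s t 6 1 P P2"
    and P2: "\<forall>(C, k)\<in>P2. is_circuit C \<and> circ_depth_le C d"
  shows "P \<in> LOCAL_FPT c"
proof -
  obtain A sf rf tf pf where tf: "computable tf" and rf: "computable rf"
    and reduction: "\<forall>G k. wf_struct s t G \<longrightarrow> valid_ids c G \<longrightarrow>
           (let Out = (\<lambda>v. a_out A (lrun A k G (tf k) v)); G' = image_struct Out (sverts G)
            in \<exists>k'. (\<forall>v\<in>sverts G. r_k (Out v) = k') \<and>
                  valid_red_output G Out (rf k) \<and> wf_struct 6 1 G' \<and>
                  card (sverts G') \<le> card (sverts G) ^ sf k \<and> k' \<le> pf k \<and>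
                  ((G, k) \<in> P \<longleftrightarrow> (G', k') \<in> P2))"
    using red unfolding local_reduces_def by blast
  define f where "f k = tf k + (2 * d + 1) * rf k" for k
  have "computable f"
    unfolding f_def by (intro computable_add computable_mult computable_const tf rf)
  moreover have "decides c s t (gather_alg A tf P2) f P"
    unfolding decides_def
  proof (intro allI impI)
    fix G k assume wfG: "wf_struct s t G" and "valid_ids c G"
    define Out where "Out = (\<lambda>v. a_out A (lrun A k G (tf k) v))"
    then obtain k' where "\<forall>v\<in>sverts G. r_k (Out v) = k'" "valid_red_output G Out (rf k)"
        "wf_struct 6 1 (image_struct Out (sverts G))"
        "(G, k) \<in> P \<longleftrightarrow> (image_struct Out (sverts G), k') \<in> P2"
      using reduction wfG \<open>valid_ids c G\<close> unfolding Let_def by blast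
    then show "(G, k) \<in> P \<longleftrightarrow>
        (\<exists>v\<in>sverts G. a_out (gather_alg A tf P2) (lrun (gather_alg A tf P2) k G (f k) v))"
      using image_accepted_iff_ball_image_accepted[OF _ wfG _ P2]
      unfolding f_def gather_alg_accepts_iff[OF wfG] Out_def by blast
  qed
  ultimately show ?thesis using P unfolding LOCAL_FPT_def by blast
qed

theorem mainTheorem4:
  fixes c t :: nat
  assumes "c \<ge> 1" and "t \<ge> 1"
  shows "LOCAL_WEFT c t \<subseteq> LOCAL_FPT c"
proof
  fix P assume "P \<in> LOCAL_WEFT c t"
  then obtain s t' P2 where "param_problem s t' P" "local_reduces c s t' 6 1 P P2" "P2 \<in> Weft t"
    unfolding LOCAL_WEFT_def by blast
  moreover from \<open>P2 \<in> Weft t\<close> obtain d where "\<forall>(C, k)\<in>P2. is_circuit C \<and> circ_depth_le C d"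
    using Weft_depth_bounded by blast
  ultimately show "P \<in> LOCAL_FPT c" using local_reduces_depth_bounded_circuits_FPT by blast
qed

end
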